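(* (1) The set $\{\xi\in\Sigma_2\colon I_{[\xi]}\text{ is a single point}\}$ is residual in $\Sigma_2$. (2) For every $\xi^+\in\Sigma_2^+$, the set $\{\xi^-\in\Sigma_2^-\colon I_{[\xi^-.\xi^+]}\text{ is a non-trivial interval}\}$ is uncountable and dense in $\Sigma_2^-$. Moreover, for every closed interval $J\subset(0,1)$ and every $\xi^+\in\Sigma_2^+$, the set of $\xi^-\in\Sigma_2^-$ with $I_{[\xi^-.\xi^+]}\supset J$ is uncountable.
   Context: Let $f_0,f_1\colon[0,1]\to[0,1]$ be $C^1$ injective maps such that: (F0.i) $f_0$ is increasing and has exactly two fixed points $0$ and $1$, both hyperbolic, with $f_0'(0)=\beta>1$, $f_0'(1)=\lambda\in(0,1)$ and $\lambda\le f_0'(x)\le\beta$ for all $x\in[0,1]$; (F0.ii) there are intervals $I_0=[a_0,b_0]\subset(0,1)$ with $b_0=f_0(a_0)$ and $I_1=[a_1,b_1]$ with $b_1=f_0(a_1)$, and numbers $\alpha>1$, $N\ge1$, with $f_0^N(I_0)=I_1$ and $\lambda\,(f_0^N)'(x)>\alpha$ for all $x\in I_0$; moreover $f_0$ is expanding on $[0,b_0]$ and contracting on $[a_1,1]$; (F1.i) $f_1$ is decreasing with $\gamma'=\min_{[0,1]}|f_1'|\le\gamma=\max_{[0,1]}|f_1'|<1$; (F1.ii) $|f_1'(x)|\ge\bar\alpha>1/\alpha$ for all $x\in[f_1^2(a_1),a_1]$; (F01) $f_1(1)=0$, $f_1([a_1,1])\subset[0,a_0)$, and $[0,f_0^{-2}(b_0))\subset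 f_1([0,1])$. $\Sigma_2=\{0,1\}^{\mathbb Z}$ with the metric $d(\xi,\eta)=\sum_i2^{-|i|}|\xi_i-\eta_i|$; $\Sigma_2^+=\{0,1\}^{\mathbb N}$, $\Sigma_2^-=\{0,1\}^{-\mathbb N}$ (product topologies), and a sequence $\xi\in\Sigma_2$ is written $\xi=\xi^-.\xi^+$ with $\xi^-=(\ldots\xi_{-2}\xi_{-1})$, $\xi^+=(\xi_0\xi_1\ldots)$. The admissible domain of $\xi$ is $I_{[\xi]}=\bigcap_{m\ge1}f_{\xi_{-1}}\circ\cdots\circ f_{\xi_{-m}}([0,1])$, a nested intersection of non-trivial compact intervals, hence a point or a non-trivial interval. *)

theory Defs
  imports "HOL-Analysis.Analysis"
begin

text \<open>Symbols: the alphabet {0,1} is represented by bool, with False = 0 and True = 1.\<close>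

definition fsel :: "(real \<Rightarrow> real) \<Rightarrow> (real \<Rightarrow> real) \<Rightarrow> bool \<Rightarrow> real \<Rightarrow> real" where
  "fsel f0 f1 b = (if b then f1 else f0)"

text \<open>Two-sided sequences xi :: int => bool (Sigma_2).
  One-sided past xm :: nat => bool (Sigma_2^-), with xm n = xi_{-(n+1)}.
  One-sided future xp :: nat => bool (Sigma_2^+), with xp n = xi_n.\<close>

definition negpart :: "(int \<Rightarrow> bool) \<Rightarrow> nat \<Rightarrow> bool" where
  "negpart xi = (\<lambda>n. xi (- int n - 1))"

definition glue :: "(nat \<Rightarrow> bool) \<Rightarrow> (nat \<Rightarrow> bool) \<Rightarrow> int \<Rightarrow> bool" where
  "glue xm xp = (\<lambda>i. if 0 \<le> i then xp (nat i) else xm (nat (- i - 1)))"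

definition dSigma :: "(int \<Rightarrow> bool) \<Rightarrow> (int \<Rightarrow> bool) \<Rightarrow> real" where
  "dSigma xi eta = (\<Sum>\<^sub>\<infinity> i::int. (1/2) ^ nat \<bar>i\<bar> * of_bool (xi i \<noteq> eta i))"

definition Sigma2_top :: "(int \<Rightarrow> bool) topology" where
  "Sigma2_top = Metric_space.mtopology UNIV dSigma"

definition Sigma2_half_top :: "(nat \<Rightarrow> bool) topology" where
  "Sigma2_half_top = product_topology (\<lambda>_. discrete_topology UNIV) UNIV"

definition residual_in :: "'a topology \<Rightarrow> 'a set \<Rightarrow> bool" where
  "residual_in X S \<longleftrightarrow> S \<subseteq> topspace X \<and>
     (\<exists>U :: nat \<Rightarrow> 'a set. (\<forall>n. openin X (U n) \<and> X closure_of (U n) = topspace X)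
        \<and> (\<Inter>n. U n) \<subseteq> S)"

definition dense_in :: "'a topology \<Rightarrow> 'a set \<Rightarrow> bool" where
  "dense_in X S \<longleftrightarrow> S \<subseteq> topspace X \<and> X closure_of S = topspace X"

text \<open>compo f0 f1 xm m = f_{xi_{-1}} o ... o f_{xi_{-m}}.\<close>
primrec compo :: "(real \<Rightarrow> real) \<Rightarrow> (real \<Rightarrow> real) \<Rightarrow> (nat \<Rightarrow> bool) \<Rightarrow> nat \<Rightarrow> real \<Rightarrow> real" where
  "compo f0 f1 xm 0 = id"
| "compo f0 f1 xm (Suc m) = compo f0 f1 xm m \<circ> fsel f0 f1 (xm m)"

definition adm_dom :: "(real \<Rightarrow> real) \<Rightarrow> (real \<Rightarrow> real) \<Rightarrow> (int \<Rightarrow> bool) \<Rightarrow> real set" where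
  "adm_dom f0 f1 xi = (\<Inter>m\<in>{1..}. compo f0 f1 (negpart xi) m ` {0..1})"

end

theory Submission
  imports Defs
begin

text \<open>Every admissible domain is a nested intersection of compact intervals, hence a point or an
  interval. For (1): the set of \<open>\<xi>\<close> with a stage of diameter \<open>< 1/(n+1)\<close> is open, since a stage
  depends only on finitely many coordinates, and dense, since appending a long run of \<open>f\<^sub>1\<close> (a
  contraction) to any finite past shrinks the stage as much as we like; its intersection over \<open>n\<close>
  consists of the \<open>\<xi>\<close> with a one-point domain. For the density in (2): a past that is eventually
  \<open>0\<close> has a stage of positive length as domain, since \<open>f\<^sub>0\<close> maps \<open>[0,1]\<close> onto itself. For the last
  claim, and with it the uncountability in (2): every \<open>J \<subset> (0,1)\<close> is the image of some
  \<open>J' \<subset> (0,1)\<close> under \<open>f\<^sub>0\<^sup>k \<circ> f\<^sub>1\<close> once \<open>k\<close> is large, because \<open>f\<^sub>0\<^sup>k(f\<^sub>1 0) \<rightarrow> 1\<close>; repeating this with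
  two admissible choices of \<open>k\<close> at every step codes each binary sequence injectively into a past
  whose domain contains \<open>J\<close>. Of the hypotheses only continuity, injectivity, monotonicity, the
  fixed points of \<open>f\<^sub>0\<close>, \<open>f\<^sub>1 1 = 0\<close> and the Lipschitz constants \<open>\<beta>\<close> and \<open>\<gamma> < 1\<close> are needed.\<close>

section \<open>The metric on two-sided sequences\<close>

definition sym_weight :: "int \<Rightarrow> real" where
  "sym_weight i = (1/2) ^ nat \<bar>i\<bar>"

lemma sym_weight_pos: "0 < sym_weight i"
  by (simp add: sym_weight_def)

lemma geometric_sum_above_le:
  assumes "finite A" "\<forall>n\<in>A. M < n"
  shows "(\<Sum>n\<in>A. (1/2::real) ^ n) \<le> (1/2) ^ M"
proof -
  define h where "h n = (if M < n then (1/2::real) ^ n else 0)" for n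
  have hs: "summable h"
    by (rule summable_comparison_test[where g="\<lambda>n. (1/2::real) ^ n"]) (auto simp: h_def)
  have "(\<Sum>n\<in>A. (1/2::real) ^ n) = sum h A" using assms by (auto simp: h_def intro!: sum.cong)
  also have "\<dots> \<le> suminf h" by (rule sum_le_suminf[OF hs assms(1)]) (auto simp: h_def)
  also have "suminf h = (\<Sum>n. h (n + Suc M)) + (\<Sum>i<Suc M. h i)"
    by (rule suminf_split_initial_segment[OF hs])
  also have "(\<Sum>i<Suc M. h i) = 0" by (auto simp: h_def)
  also have "(\<Sum>n. h (n + Suc M)) = (\<Sum>n. (1/2) ^ Suc M * (1/2::real) ^ n)"
    by (simp add: h_def power_add mult.commute)
  also have "\<dots> = (1/2) ^ Suc M * 2"
    by (subst suminf_mult) (auto simp: suminf_geometric)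
  finally show ?thesis by simp
qed

lemma sym_weight_sum_above_le:
  assumes "finite F" "\<forall>i\<in>F. M < nat \<bar>i\<bar>"
  shows "(\<Sum>i\<in>F. sym_weight i) \<le> 2 * (1/2) ^ M"
proof -
  have half: "(\<Sum>i\<in>F \<inter> P. sym_weight i) \<le> (1/2) ^ M" if "inj_on (\<lambda>i. nat \<bar>i\<bar>) P" for P
  proof -
    have "(\<Sum>i\<in>F \<inter> P. sym_weight i) = (\<Sum>n\<in>(\<lambda>i. nat \<bar>i\<bar>) ` (F \<inter> P). (1/2::real) ^ n)"
      using inj_on_subset[OF that] by (simp add: sum.reindex sym_weight_def)
    also have "\<dots> \<le> (1/2) ^ M" using assms by (intro geometric_sum_above_le) auto
    finally show ?thesis .
  qed
  have "(\<Sum>i\<in>F. sym_weight i) = (\<Sum>i\<in>F \<inter> {0..}. sym_weight i) + (\<Sum>i\<in>F \<inter> {..<0}. sym_weight i)"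
    using assms(1) by (subst sum.union_disjoint[symmetric]) (auto intro!: sum.cong)
  also have "\<dots> \<le> (1/2) ^ M + (1/2) ^ M"
    by (intro add_mono half) (auto simp: inj_on_def)
  finally show ?thesis by simp
qed

lemma sym_weight_sum_le:
  assumes "finite F"
  shows "(\<Sum>i\<in>F. sym_weight i) \<le> 3"
proof -
  have "(\<Sum>i\<in>F. sym_weight i) = (\<Sum>i\<in>F \<inter> {0}. sym_weight i) + (\<Sum>i\<in>F - {0}. sym_weight i)"
    using assms by (subst sum.union_disjoint[symmetric]) (auto intro!: sum.cong)
  also have "(\<Sum>i\<in>F \<inter> {0}. sym_weight i) \<le> 1"
    by (cases "0 \<in> F") (auto simp: sym_weight_def Int_insert_right)
  also have "(\<Sum>i\<in>F - {0}. sym_weight i) \<le> 2 * (1/2) ^ 0"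
    using assms by (intro sym_weight_sum_above_le) auto
  finally show ?thesis by simp
qed

lemma summable_on_if_dominated_by_sym_weight:
  assumes "\<And>i. 0 \<le> g i \<and> g i \<le> sym_weight i"
  shows "g summable_on UNIV"
proof (rule nonneg_bdd_above_summable_on)
  show "bdd_above (sum g ` {F. F \<subseteq> UNIV \<and> finite F})"
  proof (rule bdd_aboveI)
    fix x assume "x \<in> sum g ` {F. F \<subseteq> UNIV \<and> finite F}"
    then obtain F where F: "finite F" "x = sum g F" by auto
    have "sum g F \<le> sum sym_weight F" using assms by (intro sum_mono) auto
    with sym_weight_sum_le[OF F(1)] F show "x \<le> 3" by simp
  qed
qed (use assms in auto)

lemma infsum_le_if_dominated_by_sym_weight_tail:
  assumes "\<And>i. 0 \<le> g i \<and> g i \<le> sym_weight i" "\<And>i. nat \<bar>i\<bar> \<le> M \<Longrightarrow> g i = 0"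
  shows "infsum g UNIV \<le> 2 * (1/2) ^ M"
proof (rule infsum_le_finite_sums[OF summable_on_if_dominated_by_sym_weight[OF assms(1)]])
  fix F :: "int set" assume F: "finite F"
  have "sum g F = sum g (F \<inter> {i. M < nat \<bar>i\<bar>})"
    using F assms(2) by (intro sum.mono_neutral_right) (auto simp: not_less)
  also have "\<dots> \<le> sum sym_weight (F \<inter> {i. M < nat \<bar>i\<bar>})"
    using assms(1) by (intro sum_mono) auto
  also have "\<dots> \<le> 2 * (1/2) ^ M" using F by (intro sym_weight_sum_above_le) auto
  finally show "sum g F \<le> 2 * (1/2) ^ M" .
qed

lemma dSigma_eq_infsum:
  "dSigma xi eta = infsum (\<lambda>i. sym_weight i * of_bool (xi i \<noteq> eta i)) UNIV"
  by (simp add: dSigma_def sym_weight_def)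

lemma sym_weight_term_bounds: "0 \<le> sym_weight i * of_bool P \<and> sym_weight i * of_bool P \<le> sym_weight i"
  by (simp add: sym_weight_def)

lemma dSigma_summable: "(\<lambda>i. sym_weight i * of_bool (xi i \<noteq> eta i)) summable_on UNIV"
  by (rule summable_on_if_dominated_by_sym_weight[OF sym_weight_term_bounds])

lemma sym_weight_le_dSigma:
  assumes "xi i \<noteq> eta i"
  shows "sym_weight i \<le> dSigma xi eta"
proof -
  have "infsum (\<lambda>i. sym_weight i * of_bool (xi i \<noteq> eta i)) {i}
      \<le> infsum (\<lambda>i. sym_weight i * of_bool (xi i \<noteq> eta i)) UNIV"
    by (rule infsum_mono_neutral[OF _ dSigma_summable]) (auto simp: sym_weight_term_bounds)
  then show ?thesis using assms by (simp add: dSigma_eq_infsum)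
qed

lemma dSigma_less_imp_eq:
  assumes "dSigma xi eta < (1/2) ^ M" "nat \<bar>i\<bar> \<le> M"
  shows "xi i = eta i"
proof (rule ccontr)
  assume "xi i \<noteq> eta i"
  then have "sym_weight i \<le> dSigma xi eta" by (rule sym_weight_le_dSigma)
  moreover have "(1/2::real) ^ M \<le> sym_weight i"
    unfolding sym_weight_def using assms(2) by (intro power_decreasing) auto
  ultimately show False using assms(1) by simp
qed

lemma dSigma_le_if_agree:
  assumes "\<And>i. nat \<bar>i\<bar> \<le> M \<Longrightarrow> xi i = eta i"
  shows "dSigma xi eta \<le> 2 * (1/2) ^ M"
  unfolding dSigma_eq_infsum
  by (rule infsum_le_if_dominated_by_sym_weight_tail) (auto simp: sym_weight_term_bounds assms)

lemma Metric_space_dSigma: "Metric_space UNIV dSigma"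
proof
  fix x y z :: "int \<Rightarrow> bool"
  show "0 \<le> dSigma x y"
    unfolding dSigma_eq_infsum by (rule infsum_nonneg) (simp add: sym_weight_term_bounds)
  show "dSigma x y = dSigma y x"
    unfolding dSigma_eq_infsum by (simp add: eq_commute[of "x _"])
  show "dSigma x y = 0 \<longleftrightarrow> x = y"
  proof
    assume "dSigma x y = 0"
    then have "x i = y i" for i
      using sym_weight_le_dSigma[of x i y] sym_weight_pos[of i] by fastforce
    then show "x = y" by blast
  qed (simp add: dSigma_eq_infsum)
  have "dSigma x z \<le> infsum (\<lambda>i. sym_weight i * of_bool (x i \<noteq> y i)
                                  + sym_weight i * of_bool (y i \<noteq> z i)) UNIV"
    unfolding dSigma_eq_infsum
    by (rule infsum_mono[OF dSigma_summable summable_on_add[OF dSigma_summable dSigma_summable]])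
       (auto simp: sym_weight_def)
  also have "\<dots> = dSigma x y + dSigma y z"
    unfolding dSigma_eq_infsum by (rule infsum_add[OF dSigma_summable dSigma_summable])
  finally show "dSigma x z \<le> dSigma x y + dSigma y z" .
qed

lemma compo_cong:
  "(\<And>i. i < m \<Longrightarrow> xm i = ym i) \<Longrightarrow> compo f0 f1 xm m = compo f0 f1 ym m"
  by (induction m) auto

lemma compo_add:
  "compo f0 f1 xm (m + n) = compo f0 f1 xm m \<circ> compo f0 f1 (\<lambda>i. xm (m + i)) n"
  by (induction n) auto

lemma compo_const: "compo f0 f1 (\<lambda>_. b) n = fsel f0 f1 b ^^ n"
  by (induction n) (auto simp: fun_eq_iff funpow_swap1)

lemma negpart_glue [simp]: "negpart (glue xm xp) = xm"
  by (auto simp: negpart_def glue_def)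

lemma mono_on_image_atLeastAtMost:
  fixes g :: "real \<Rightarrow> real"
  assumes "a \<le> b" "continuous_on {a..b} g" "mono_on {a..b} g"
  shows "g ` {a..b} = {g a..g b}"
proof
  show "g ` {a..b} \<subseteq> {g a..g b}" using assms(1,3) by (auto simp: mono_on_def)
  show "{g a..g b} \<subseteq> g ` {a..b}"
  proof
    fix y assume "y \<in> {g a..g b}"
    then obtain x where "a \<le> x" "x \<le> b" "g x = y" using IVT'[of g a y b] assms by auto
    then show "y \<in> g ` {a..b}" by auto
  qed
qed

lemma antimono_on_image_atLeastAtMost:
  fixes g :: "real \<Rightarrow> real"
  assumes "a \<le> b" "continuous_on {a..b} g" "antimono_on {a..b} g"
  shows "g ` {a..b} = {g b..g a}"
proof
  show "g ` {a..b} \<subseteq> {g b..g a}" using assms(1,3) by (auto simp: monotone_on_def)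
  show "{g b..g a} \<subseteq> g ` {a..b}"
  proof
    fix y assume "y \<in> {g b..g a}"
    then obtain x where "a \<le> x" "x \<le> b" "g x = y" using IVT2'[of g b y a] assms by auto
    then show "y \<in> g ` {a..b}" by auto
  qed
qed

section \<open>Nested stages and admissible domains\<close>

locale step_skew_maps =
  fixes f0 f1 :: "real \<Rightarrow> real"
  assumes cont0: "continuous_on {0..1} f0" and cont1: "continuous_on {0..1} f1"
    and maps0: "f0 ` {0..1} \<subseteq> {0..1}" and maps1: "f1 ` {0..1} \<subseteq> {0..1}"
    and inj0: "inj_on f0 {0..1}" and inj1: "inj_on f1 {0..1}"
    and mono0: "mono_on {0..1} f0" and antimono1: "antimono_on {0..1} f1"
    and f0_0: "f0 0 = 0" and f0_1: "f0 1 = 1"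
    and f0_above_diagonal: "\<And>x. 0 < x \<Longrightarrow> x < 1 \<Longrightarrow> x < f0 x"
    and f1_1: "f1 1 = 0"
begin

abbreviation stage :: "(nat \<Rightarrow> bool) \<Rightarrow> nat \<Rightarrow> real set" where
  "stage xm m \<equiv> compo f0 f1 xm m ` {0..1}"

lemma fsel_in_unit: "x \<in> {0..1} \<Longrightarrow> fsel f0 f1 b x \<in> {0..1}"
  using maps0 maps1 by (auto simp: fsel_def image_subset_iff)

lemma fsel_nonneg [simp]: "0 \<le> x \<Longrightarrow> x \<le> 1 \<Longrightarrow> 0 \<le> fsel f0 f1 b x"
  using fsel_in_unit[of x b] by auto

lemma fsel_le_one [simp]: "0 \<le> x \<Longrightarrow> x \<le> 1 \<Longrightarrow> fsel f0 f1 b x \<le> 1"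
  using fsel_in_unit[of x b] by auto

lemma continuous_on_fsel: "continuous_on {0..1} (fsel f0 f1 b)"
  using cont0 cont1 by (auto simp: fsel_def)

lemma inj_on_fsel: "inj_on (fsel f0 f1 b) {0..1}"
  using inj0 inj1 by (auto simp: fsel_def)

lemma compo_in_unit: "x \<in> {0..1} \<Longrightarrow> compo f0 f1 xm m x \<in> {0..1}"
  by (induction m arbitrary: x) auto

lemma compo_nonneg [simp]: "0 \<le> x \<Longrightarrow> x \<le> 1 \<Longrightarrow> 0 \<le> compo f0 f1 xm m x"
  using compo_in_unit[of x xm m] by auto

lemma compo_le_one [simp]: "0 \<le> x \<Longrightarrow> x \<le> 1 \<Longrightarrow> compo f0 f1 xm m x \<le> 1"
  using compo_in_unit[of x xm m] by auto

lemma continuous_on_compo: "continuous_on {0..1} (compo f0 f1 xm m)"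
proof (induction m)
  case (Suc m)
  show ?case unfolding compo.simps
    by (rule continuous_on_compose[OF continuous_on_fsel continuous_on_subset[OF Suc]])
       (auto simp: fsel_in_unit)
qed (auto intro: continuous_on_id)

lemma inj_on_compo: "inj_on (compo f0 f1 xm m) {0..1}"
proof (induction m)
  case (Suc m)
  show ?case unfolding compo.simps
    by (rule comp_inj_on[OF inj_on_fsel inj_on_subset[OF Suc]]) (auto simp: fsel_in_unit)
qed simp

lemma stage_Suc_subset: "stage xm (Suc m) \<subseteq> stage xm m"
proof -
  have "stage xm (Suc m) = compo f0 f1 xm m ` (fsel f0 f1 (xm m) ` {0..1})"
    by (simp add: image_comp)
  also have "\<dots> \<subseteq> stage xm m" using fsel_in_unit by (intro image_mono) auto
  finally show ?thesis .
qed

lemma stage_antimono: "m \<le> m' \<Longrightarrow> stage xm m' \<subseteq> stage xm m"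
proof (induction m' rule: dec_induct)
  case (step n)
  then show ?case using stage_Suc_subset[of xm n] by blast
qed simp

lemma compact_stage: "compact (stage xm m)"
  by (rule compact_continuous_image[OF continuous_on_compo]) simp

lemma connected_stage: "connected (stage xm m)"
  by (rule connected_continuous_image[OF continuous_on_compo]) simp

lemma stage_nontrivial: "\<exists>a b. a < b \<and> stage xm m = {a..b}"
proof -
  have "connected (stage xm m) \<and> compact (stage xm m)"
    by (simp add: compact_stage connected_stage)
  then obtain a b where ab: "stage xm m = {a..b}"
    unfolding connected_compact_interval_1 by blast
  have "compo f0 f1 xm m 0 \<noteq> compo f0 f1 xm m 1"
    using inj_onD[OF inj_on_compo, of xm m 0 1] by auto
  moreover have "compo f0 f1 xm m 0 \<in> {a..b}" "compo f0 f1 xm m 1 \<in> {a..b}"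
    using ab[symmetric] by auto
  ultimately have "a < b" by auto
  with ab show ?thesis by blast
qed

lemma adm_dom_subset_stage: "adm_dom f0 f1 xi \<subseteq> stage (negpart xi) m"
proof -
  have "adm_dom f0 f1 xi \<subseteq> stage (negpart xi) (Suc m)"
    unfolding adm_dom_def by (rule INT_lower) simp
  then show ?thesis using stage_Suc_subset by blast
qed

lemma adm_dom_eq_Inter_stage: "adm_dom f0 f1 xi = (\<Inter>m. stage (negpart xi) m)"
proof (intro equalityI subsetI)
  fix x assume "x \<in> (\<Inter>m. stage (negpart xi) m)"
  then show "x \<in> adm_dom f0 f1 xi" unfolding adm_dom_def by blast
qed (use adm_dom_subset_stage in blast)

lemma adm_dom_nonempty: "adm_dom f0 f1 xi \<noteq> {}"
  unfolding adm_dom_eq_Inter_stage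
  by (rule compact_nest) (auto simp: compact_stage stage_antimono)

lemma adm_dom_interval: "\<exists>a b. a \<le> b \<and> adm_dom f0 f1 xi = {a..b}"
proof -
  have "compact (adm_dom f0 f1 xi)"
    unfolding adm_dom_eq_Inter_stage by (rule compact_Inter) (auto simp: compact_stage)
  moreover have "connected (adm_dom f0 f1 xi)"
  proof -
    have "convex (stage (negpart xi) m)" for m
      using connected_stage connected_convex_1 by blast
    then have "convex (\<Inter>m. stage (negpart xi) m)"
      by (intro convex_Inter) blast
    then show ?thesis unfolding adm_dom_eq_Inter_stage using connected_convex_1 by blast
  qed
  ultimately obtain a b where "adm_dom f0 f1 xi = {a..b}"
    using connected_compact_interval_1 by blast
  with adm_dom_nonempty[of xi] show ?thesis by (auto intro!: exI[of _ a])
qed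

lemma f0_ge: "0 \<le> x \<Longrightarrow> x \<le> 1 \<Longrightarrow> x \<le> f0 x"
  using f0_above_diagonal[of x] f0_0 f0_1 by (cases "x = 0 \<or> x = 1") auto

lemma funpow_f0_eq_compo: "f0 ^^ k = compo f0 f1 (\<lambda>_. False) k"
  by (simp add: compo_const fsel_def)

lemma funpow_f0_nonneg [simp]: "0 \<le> x \<Longrightarrow> x \<le> 1 \<Longrightarrow> 0 \<le> (f0 ^^ k) x"
  by (simp add: funpow_f0_eq_compo)

lemma funpow_f0_le_one [simp]: "0 \<le> x \<Longrightarrow> x \<le> 1 \<Longrightarrow> (f0 ^^ k) x \<le> 1"
  by (simp add: funpow_f0_eq_compo)

lemma continuous_on_funpow_f0: "continuous_on {0..1} (f0 ^^ k)"
  by (simp add: funpow_f0_eq_compo continuous_on_compo)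

lemma funpow_f0_0 [simp]: "(f0 ^^ k) 0 = 0"
  by (induction k) (auto simp: f0_0)

lemma funpow_f0_mono: "0 \<le> x \<Longrightarrow> x \<le> y \<Longrightarrow> y \<le> 1 \<Longrightarrow> (f0 ^^ k) x \<le> (f0 ^^ k) y"
proof (induction k)
  case (Suc k)
  then show ?case using mono0 by (auto simp: mono_on_def)
qed simp

lemma mono_on_funpow_f0: "mono_on {0..1} (f0 ^^ k)"
  by (auto simp: mono_on_def intro: funpow_f0_mono)

lemma funpow_f0_strict_mono:
  assumes "0 \<le> x" "x < y" "y \<le> 1"
  shows "(f0 ^^ k) x < (f0 ^^ k) y"
proof -
  have "(f0 ^^ k) x \<le> (f0 ^^ k) y" using assms by (intro funpow_f0_mono) auto
  moreover have "(f0 ^^ k) x \<noteq> (f0 ^^ k) y"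
    using inj_onD[OF inj_on_compo, of "\<lambda>_. False" k x y] assms
    by (auto simp: funpow_f0_eq_compo)
  ultimately show ?thesis by simp
qed

lemma funpow_f0_image_unit: "(f0 ^^ k) ` {0..1} = {0..1}"
proof -
  have "(f0 ^^ k) 1 = 1" by (induction k) (auto simp: f0_1)
  then show ?thesis
    using mono_on_image_atLeastAtMost[of 0 1 "f0 ^^ k"] continuous_on_funpow_f0 mono_on_funpow_f0
    by simp
qed

lemma funpow_f0_ge: "0 \<le> x \<Longrightarrow> x \<le> 1 \<Longrightarrow> x \<le> (f0 ^^ k) x"
proof (induction k)
  case (Suc k)
  then show ?case using f0_ge[of "(f0 ^^ k) x"] by auto
qed simp

lemma funpow_f0_mono_in_exponent:
  assumes x: "0 \<le> x" "x \<le> 1" and "k \<le> k'"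
  shows "(f0 ^^ k) x \<le> (f0 ^^ k') x"
proof -
  obtain j where j: "k' = k + j" using \<open>k \<le> k'\<close> le_Suc_ex by blast
  have "(f0 ^^ k) x \<le> (f0 ^^ k) ((f0 ^^ j) x)"
    using x funpow_f0_ge[of x j] by (intro funpow_f0_mono) auto
  then show ?thesis by (simp add: j funpow_add)
qed

text \<open>On \<open>[e,r]\<close> the displacement \<open>f\<^sub>0 x - x\<close> has a positive minimum, so an orbit that stayed
  there would grow at least linearly.\<close>

lemma funpow_f0_escapes:
  assumes e: "0 < e" "e \<le> 1" and r: "r < 1"
  shows "\<exists>k. r < (f0 ^^ k) e"
proof (rule ccontr)
  assume "\<not> ?thesis"
  then have le: "\<And>k. (f0 ^^ k) e \<le> r" by (simp add: not_less)
  have er: "e \<le> r" using le[of 0] by simp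
  have cont: "continuous_on {e..r} (\<lambda>x. f0 x - x)"
    using e r by (intro continuous_intros continuous_on_subset[OF cont0]) auto
  obtain z where z: "z \<in> {e..r}" "\<And>y. y \<in> {e..r} \<Longrightarrow> f0 z - z \<le> f0 y - y"
    using continuous_attains_inf[OF _ _ cont] er by fastforce
  define \<delta> where "\<delta> = f0 z - z"
  have \<delta>_pos: "0 < \<delta>" using z(1) e r f0_above_diagonal[of z] by (auto simp: \<delta>_def)
  have linear_growth: "e + real k * \<delta> \<le> (f0 ^^ k) e" for k
  proof (induction k)
    case (Suc k)
    have "(f0 ^^ k) e \<in> {e..r}" using funpow_f0_ge[of e k] e le[of k] by auto
    then have "\<delta> \<le> f0 ((f0 ^^ k) e) - (f0 ^^ k) e" using z(2) by (simp add: \<delta>_def)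
    then show ?case using Suc by (simp add: algebra_simps)
  qed simp
  obtain k where "r - e < real k * \<delta>" using reals_Archimedean3[OF \<delta>_pos] by blast
  with linear_growth[of k] le[of k] show False by simp
qed

lemma f1_strict_antimono:
  assumes "0 \<le> x" "x < y" "y \<le> 1"
  shows "f1 y < f1 x"
proof -
  have "f1 y \<le> f1 x" using antimono1 assms unfolding monotone_on_def by simp
  moreover have "f1 y \<noteq> f1 x" using inj_onD[OF inj1, of y x] assms by auto
  ultimately show ?thesis by simp
qed

lemma f1_0_bounds: "0 < f1 0" "f1 0 \<le> 1"
proof -
  show "0 < f1 0" using f1_strict_antimono[of 0 1] f1_1 by simp
  show "f1 0 \<le> 1" using fsel_le_one[of 0 True] by (simp add: fsel_def)
qed

lemma f1_image_unit: "f1 ` {0..1} = {0..f1 0}"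
  using antimono_on_image_atLeastAtMost[of 0 1 f1] cont1 antimono1 f1_1 by simp

lemma interval_is_block_image:
  assumes lr: "0 < l" "l \<le> r" "r < 1" and k: "r < (f0 ^^ k) (f1 0)"
  shows "\<exists>l' r'. 0 < l' \<and> l' \<le> r' \<and> r' < 1 \<and> ((f0 ^^ k) \<circ> f1) ` {l'..r'} = {l..r}"
proof -
  define e where "e = f1 0"
  have e: "0 < e" "e \<le> 1" using f1_0_bounds by (auto simp: e_def)
  have "(f0 ^^ k) ` {0..e} = {0..(f0 ^^ k) e}"
    using mono_on_image_atLeastAtMost[of 0 e "f0 ^^ k"] e continuous_on_subset[OF continuous_on_funpow_f0]
      mono_on_subset[OF mono_on_funpow_f0] by auto
  then have "l \<in> (f0 ^^ k) ` {0..e}" "r \<in> (f0 ^^ k) ` {0..e}" using lr k by (auto simp: e_def)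
  then obtain u v where u: "u \<in> {0..e}" "(f0 ^^ k) u = l" and v: "v \<in> {0..e}" "(f0 ^^ k) v = r"
    by blast
  have uv: "u \<le> v"
  proof (rule ccontr)
    assume "\<not> u \<le> v"
    then have "(f0 ^^ k) v < (f0 ^^ k) u" using u v e by (intro funpow_f0_strict_mono) auto
    then show False using u v lr by simp
  qed
  have u0: "0 < u" using u lr by (cases "u = 0") auto
  have ve: "v < e" using v k e_def by (cases "v = e") auto
  have "u \<in> f1 ` {0..1}" "v \<in> f1 ` {0..1}" using f1_image_unit u v by (auto simp: e_def)
  then obtain l' r' where r': "r' \<in> {0..1}" "f1 r' = u" and l': "l' \<in> {0..1}" "f1 l' = v"
    by blast
  have lr': "l' \<le> r'"
  proof (rule ccontr)
    assume "\<not> l' \<le> r'"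
    then have "f1 l' < f1 r'" using l' r' by (intro f1_strict_antimono) auto
    then show False using uv l' r' by simp
  qed
  have r'1: "r' < 1" using r' u0 f1_1 by (cases "r' = 1") auto
  have l'0: "0 < l'" using l' ve e_def by (cases "l' = 0") auto
  have "f1 ` {l'..r'} = {u..v}"
    using antimono_on_image_atLeastAtMost[of l' r' f1] lr' l' r' continuous_on_subset[OF cont1]
      monotone_on_subset[OF antimono1] by auto
  moreover have "(f0 ^^ k) ` {u..v} = {l..r}"
    using mono_on_image_atLeastAtMost[of u v "f0 ^^ k"] uv u v e
      continuous_on_subset[OF continuous_on_funpow_f0] mono_on_subset[OF mono_on_funpow_f0] by auto
  ultimately have "((f0 ^^ k) \<circ> f1) ` {l'..r'} = {l..r}" by (simp only: image_comp[symmetric])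
  with l'0 lr' r'1 show ?thesis by blast
qed

section \<open>Uncountably many pasts whose domain contains a given interval\<close>

definition inner_interval :: "real \<times> real \<Rightarrow> bool" where
  "inner_interval J \<longleftrightarrow> 0 < fst J \<and> fst J \<le> snd J \<and> snd J < 1"

definition escape_time :: "real \<Rightarrow> nat" where
  "escape_time r = (LEAST k. r < (f0 ^^ k) (f1 0))"

lemma less_funpow_f0_if_escape_time_le:
  assumes "r < 1" "escape_time r \<le> k"
  shows "r < (f0 ^^ k) (f1 0)"
proof -
  have "r < (f0 ^^ escape_time r) (f1 0)" unfolding escape_time_def
    by (rule LeastI_ex) (rule funpow_f0_escapes[OF f1_0_bounds assms(1)])
  also have "\<dots> \<le> (f0 ^^ k) (f1 0)"
    using f1_0_bounds assms(2) by (intro funpow_f0_mono_in_exponent) auto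
  finally show ?thesis .
qed

definition pullback :: "real \<times> real \<Rightarrow> nat \<Rightarrow> real \<times> real" where
  "pullback J k = (SOME J'. inner_interval J' \<and> ((f0 ^^ k) \<circ> f1) ` {fst J'..snd J'} = {fst J..snd J})"

lemma pullback:
  assumes "inner_interval J" "escape_time (snd J) \<le> k"
  shows "inner_interval (pullback J k)"
    and "((f0 ^^ k) \<circ> f1) ` {fst (pullback J k)..snd (pullback J k)} = {fst J..snd J}"
proof -
  have "snd J < (f0 ^^ k) (f1 0)"
    using assms by (intro less_funpow_f0_if_escape_time_le) (auto simp: inner_interval_def)
  then obtain l' r' where "0 < l' \<and> l' \<le> r' \<and> r' < 1 \<and> ((f0 ^^ k) \<circ> f1) ` {l'..r'} = {fst J..snd J}"
    using interval_is_block_image assms(1) unfolding inner_interval_def by blast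
  then have "\<exists>J'. inner_interval J' \<and> ((f0 ^^ k) \<circ> f1) ` {fst J'..snd J'} = {fst J..snd J}"
    by (intro exI[of _ "(l', r')"]) (simp add: inner_interval_def)
  then have "inner_interval (pullback J k) \<and>
      ((f0 ^^ k) \<circ> f1) ` {fst (pullback J k)..snd (pullback J k)} = {fst J..snd J}"
    unfolding pullback_def by (rule someI_ex)
  then show "inner_interval (pullback J k)"
    and "((f0 ^^ k) \<circ> f1) ` {fst (pullback J k)..snd (pullback J k)} = {fst J..snd J}"
    by auto
qed

text \<open>The binary sequence \<open>s\<close> is coded by pulling \<open>J\<close> back along blocks \<open>f\<^sub>0\<^sup>k \<circ> f\<^sub>1\<close>, where at
  step \<open>n\<close> the length \<open>k\<close> is the least admissible one plus \<open>s n\<close>.\<close>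

primrec coding_interval :: "real \<times> real \<Rightarrow> (nat \<Rightarrow> bool) \<Rightarrow> nat \<Rightarrow> real \<times> real" where
  "coding_interval J s 0 = J"
| "coding_interval J s (Suc n) =
     (let I = coding_interval J s n in pullback I (escape_time (snd I) + of_bool (s n)))"

definition block_length :: "real \<times> real \<Rightarrow> (nat \<Rightarrow> bool) \<Rightarrow> nat \<Rightarrow> nat" where
  "block_length J s n = escape_time (snd (coding_interval J s n)) + of_bool (s n)"

lemma coding_interval_Suc_eq_pullback [simp]:
  "coding_interval J s (Suc n) = pullback (coding_interval J s n) (block_length J s n)"
  by (simp add: block_length_def Let_def)

declare coding_interval.simps(2) [simp del]

definition block :: "nat \<Rightarrow> bool list" where
  "block k = replicate k False @ [True]"

definition coding_word :: "real \<times> real \<Rightarrow> (nat \<Rightarrow> bool) \<Rightarrow> nat \<Rightarrow> bool list" where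
  "coding_word J s n = concat (map (\<lambda>j. block (block_length J s j)) [0..<n])"

lemma coding_word_0 [simp]: "coding_word J s 0 = []"
  by (simp add: coding_word_def)

lemma coding_word_Suc: "coding_word J s (Suc n) = coding_word J s n @ block (block_length J s n)"
  by (simp add: coding_word_def)

definition coded_past :: "real \<times> real \<Rightarrow> (nat \<Rightarrow> bool) \<Rightarrow> nat \<Rightarrow> bool" where
  "coded_past J s i = coding_word J s (Suc i) ! i"

definition word_map :: "bool list \<Rightarrow> real \<Rightarrow> real" where
  "word_map w = compo f0 f1 (\<lambda>i. w ! i) (length w)"

lemma word_map_append: "word_map (w @ v) = word_map w \<circ> word_map v"
proof -
  have "word_map (w @ v) = compo f0 f1 (\<lambda>i. (w @ v) ! i) (length w)
                          \<circ> compo f0 f1 (\<lambda>i. (w @ v) ! (length w + i)) (length v)"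
    unfolding word_map_def by (simp add: compo_add)
  also have "compo f0 f1 (\<lambda>i. (w @ v) ! i) (length w) = word_map w"
    unfolding word_map_def by (rule compo_cong) (simp add: nth_append)
  also have "compo f0 f1 (\<lambda>i. (w @ v) ! (length w + i)) (length v) = word_map v"
    unfolding word_map_def by (rule compo_cong) simp
  finally show ?thesis .
qed

lemma word_map_block: "word_map (block k) = (f0 ^^ k) \<circ> f1"
proof -
  have "word_map (replicate k False) = f0 ^^ k"
    unfolding word_map_def funpow_f0_eq_compo length_replicate by (rule compo_cong) simp
  moreover have "word_map [True] = f1" by (simp add: word_map_def fsel_def)
  ultimately show ?thesis by (simp add: block_def word_map_append)
qed

lemma coding_invariant:
  assumes "inner_interval J"
  shows "inner_interval (coding_interval J s n) \<and>
    word_map (coding_word J s n) ` {fst (coding_interval J s n)..snd (coding_interval J s n)}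
      = {fst J..snd J}"
proof (induction n)
  case 0
  then show ?case using assms by (simp add: word_map_def)
next
  case (Suc n)
  define I where "I = coding_interval J s n"
  define k where "k = block_length J s n"
  have I: "inner_interval I" "word_map (coding_word J s n) ` {fst I..snd I} = {fst J..snd J}"
    using Suc by (auto simp: I_def)
  have k: "escape_time (snd I) \<le> k" by (simp add: k_def I_def block_length_def)
  have "word_map (coding_word J s (Suc n)) ` {fst (pullback I k)..snd (pullback I k)}
      = word_map (coding_word J s n) ` (((f0 ^^ k) \<circ> f1) ` {fst (pullback I k)..snd (pullback I k)})"
    by (simp add: coding_word_Suc word_map_append word_map_block k_def image_comp)
  also have "\<dots> = {fst J..snd J}" using pullback(2)[OF I(1) k] I(2) by simp
  finally show ?case
    using pullback(1)[OF I(1) k] by (simp add: I_def k_def)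
qed

lemma length_coding_word_ge: "n \<le> length (coding_word J s n)"
  by (induction n) (auto simp: coding_word_Suc block_def)

lemma coding_word_prefix: "n \<le> n' \<Longrightarrow> \<exists>v. coding_word J s n' = coding_word J s n @ v"
proof (induction n' rule: dec_induct)
  case (step m)
  then show ?case by (auto simp: coding_word_Suc)
qed simp

lemma coded_past_eq_nth:
  assumes "i < length (coding_word J s n)"
  shows "coded_past J s i = coding_word J s n ! i"
proof (cases "Suc i \<le> n")
  case True
  then obtain v where "coding_word J s n = coding_word J s (Suc i) @ v"
    using coding_word_prefix by blast
  moreover have "i < length (coding_word J s (Suc i))"
    using length_coding_word_ge[of "Suc i" J s] by simp
  ultimately show ?thesis by (simp add: coded_past_def nth_append)
next
  case False
  then have "n \<le> Suc i" by simp
  then obtain v where "coding_word J s (Suc i) = coding_word J s n @ v"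
    using coding_word_prefix by blast
  with assms show ?thesis by (simp add: coded_past_def nth_append)
qed

lemma compo_coded_past:
  "compo f0 f1 (coded_past J s) (length (coding_word J s n)) = word_map (coding_word J s n)"
  unfolding word_map_def by (rule compo_cong) (simp add: coded_past_eq_nth)

lemma interval_subset_adm_dom_coded_past:
  assumes "inner_interval J"
  shows "{fst J..snd J} \<subseteq> adm_dom f0 f1 (glue (coded_past J s) xp)"
proof -
  have "{fst J..snd J} \<subseteq> stage (coded_past J s) m" for m
  proof -
    define I where "I = coding_interval J s m"
    define w where "w = coding_word J s m"
    have I: "inner_interval I" "word_map w ` {fst I..snd I} = {fst J..snd J}"
      using coding_invariant[OF assms, of s m] by (auto simp: I_def w_def)
    have "{fst J..snd J} = word_map w ` {fst I..snd I}" using I by simp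
    also have "\<dots> \<subseteq> word_map w ` {0..1}"
      using I(1) by (intro image_mono) (auto simp: inner_interval_def)
    also have "\<dots> = stage (coded_past J s) (length w)" by (simp add: w_def compo_coded_past)
    also have "\<dots> \<subseteq> stage (coded_past J s) m"
      by (rule stage_antimono) (simp add: w_def length_coding_word_ge)
    finally show ?thesis .
  qed
  then show ?thesis unfolding adm_dom_eq_Inter_stage by auto
qed

lemma coding_cong:
  "(\<And>j. j < n \<Longrightarrow> s j = s' j) \<Longrightarrow>
     coding_interval J s n = coding_interval J s' n \<and> coding_word J s n = coding_word J s' n"
  by (induction n) (auto simp: coding_word_Suc block_length_def)

lemma block_nth: "block (K + of_bool b) ! K = (\<not> b)"
proof (cases b)
  case True
  have "block (K + of_bool b) = replicate K False @ [False, True]"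
    using True by (simp add: block_def replicate_append_same)
  then show ?thesis using True by (simp add: nth_append)
qed (simp add: block_def nth_append)

text \<open>The first difference \<open>s n \<noteq> s' n\<close> shows up in the coded pasts at the last symbol of the
  shorter of the two \<open>n\<close>-th blocks.\<close>

lemma inj_coded_past: "inj (coded_past J)"
proof (rule injI, rule ccontr)
  fix s s' assume eq: "coded_past J s = coded_past J s'" and "s \<noteq> s'"
  then obtain n0 where "s n0 \<noteq> s' n0" by blast
  define n where "n = (LEAST n. s n \<noteq> s' n)"
  have sn: "s n \<noteq> s' n" unfolding n_def by (rule LeastI[of _ n0]) fact
  have agree: "coding_interval J s n = coding_interval J s' n \<and> coding_word J s n = coding_word J s' n"
    by (rule coding_cong) (use not_less_Least in \<open>auto simp: n_def\<close>)
  define w where "w = coding_word J s n"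
  define K where "K = escape_time (snd (coding_interval J s n))"
  have "coded_past J t (length w + K) = (\<not> t n)"
    if "coding_interval J t n = coding_interval J s n" "coding_word J t n = w" for t
  proof -
    have W: "coding_word J t (Suc n) = w @ block (K + of_bool (t n))"
      using that by (simp add: coding_word_Suc block_length_def K_def)
    have "coded_past J t (length w + K) = coding_word J t (Suc n) ! (length w + K)"
      by (rule coded_past_eq_nth) (simp add: W block_def)
    also have "\<dots> = (\<not> t n)" by (simp add: W nth_append block_nth)
    finally show ?thesis .
  qed
  then have "coded_past J s (length w + K) = (\<not> s n)" "coded_past J s' (length w + K) = (\<not> s' n)"
    using agree by (auto simp: w_def)
  with eq sn show False by simp
qed

lemma uncountable_UNIV_nat_to_bool: "\<not> countable (UNIV :: (nat \<Rightarrow> bool) set)"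
proof
  assume "countable (UNIV :: (nat \<Rightarrow> bool) set)"
  then obtain g :: "nat \<Rightarrow> nat \<Rightarrow> bool" where "range g = UNIV"
    using uncountable_def by blast
  then obtain m where "g m = (\<lambda>n. \<not> g n n)" by (metis UNIV_I imageE)
  then show False by (metis (full_types))
qed

theorem uncountable_pasts_with_interval_in_adm_dom:
  assumes "0 < c" "c \<le> d" "d < 1"
  shows "\<not> countable {xm. {c..d} \<subseteq> adm_dom f0 f1 (glue xm xp)}"
proof
  assume "countable {xm. {c..d} \<subseteq> adm_dom f0 f1 (glue xm xp)}"
  moreover have "range (coded_past (c, d)) \<subseteq> {xm. {c..d} \<subseteq> adm_dom f0 f1 (glue xm xp)}"
    using interval_subset_adm_dom_coded_past[of "(c, d)"] assms by (auto simp: inner_interval_def)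
  ultimately have "countable (range (coded_past (c, d)))" by (rule countable_subset[rotated])
  then have "countable (UNIV :: (nat \<Rightarrow> bool) set)"
    by (rule countable_image_inj_on) (rule inj_coded_past)
  then show False using uncountable_UNIV_nat_to_bool by simp
qed

section \<open>Pasts with a non-trivial domain\<close>

lemma adm_dom_eventually_zero:
  assumes "\<forall>i\<ge>K. xm i = False"
  shows "adm_dom f0 f1 (glue xm xp) = stage xm K"
proof -
  have "stage xm K \<subseteq> stage xm n" for n
  proof (cases "n \<le> K")
    case True then show ?thesis by (rule stage_antimono)
  next
    case False
    then obtain t where n: "n = K + t" using le_Suc_ex[of K n] by auto
    have "compo f0 f1 (\<lambda>i. xm (K + i)) t = f0 ^^ t"
      unfolding funpow_f0_eq_compo by (rule compo_cong) (simp add: assms)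
    then have "stage xm n = compo f0 f1 xm K ` ((f0 ^^ t) ` {0..1})"
      by (simp add: n compo_add image_comp)
    then show ?thesis by (simp add: funpow_f0_image_unit)
  qed
  then show ?thesis unfolding adm_dom_eq_Inter_stage negpart_glue by blast
qed

lemma openin_Sigma2_half_top_cylinder:
  assumes "openin Sigma2_half_top T" "x \<in> T"
  shows "\<exists>K. \<forall>y. (\<forall>i<K. y i = x i) \<longrightarrow> y \<in> T"
proof -
  from assms have "\<exists>U. finite {i \<in> UNIV. U i \<noteq> topspace (discrete_topology (UNIV :: bool set))} \<and>
      (\<forall>i \<in> UNIV. openin (discrete_topology UNIV) (U i)) \<and> x \<in> Pi\<^sub>E UNIV U \<and> Pi\<^sub>E UNIV U \<subseteq> T"
    unfolding Sigma2_half_top_def openin_product_topology_alt by blast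
  then obtain U where U: "finite {i. U i \<noteq> UNIV}" "x \<in> Pi\<^sub>E UNIV U" "Pi\<^sub>E UNIV U \<subseteq> T"
    by auto
  obtain K where K: "\<And>i. i \<in> {i. U i \<noteq> UNIV} \<Longrightarrow> i < K"
    using U(1) unfolding finite_nat_set_iff_bounded by blast
  have "y \<in> Pi\<^sub>E UNIV U" if y: "\<forall>i<K. y i = x i" for y
    unfolding PiE_iff
  proof (intro conjI ballI)
    fix i :: nat
    show "y i \<in> U i"
    proof (cases "i < K")
      case True
      then show ?thesis using U(2) y by (simp add: PiE_iff)
    next
      case False
      then have "U i = UNIV" using K by blast
      then show ?thesis by simp
    qed
  qed simp
  then show ?thesis using U(3) by (intro exI[of _ K]) blast
qed

theorem dense_pasts_with_nontrivial_adm_dom: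
  "dense_in Sigma2_half_top {xm. \<exists>a b. a < b \<and> adm_dom f0 f1 (glue xm xp) = {a..b}}"
  unfolding dense_in_def
proof (intro conjI)
  show "{xm. \<exists>a b. a < b \<and> adm_dom f0 f1 (glue xm xp) = {a..b}} \<subseteq> topspace Sigma2_half_top"
    by (simp add: Sigma2_half_top_def)
  have "x \<in> Sigma2_half_top closure_of {xm. \<exists>a b. a < b \<and> adm_dom f0 f1 (glue xm xp) = {a..b}}"
    for x
    unfolding in_closure_of
  proof (intro conjI allI impI)
    show "x \<in> topspace Sigma2_half_top" by (simp add: Sigma2_half_top_def)
    fix T assume "x \<in> T \<and> openin Sigma2_half_top T"
    then obtain K where K: "\<And>y. \<forall>i<K. y i = x i \<Longrightarrow> y \<in> T"
      using openin_Sigma2_half_top_cylinder by blast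
    define y where "y i = (i < K \<and> x i)" for i
    have "adm_dom f0 f1 (glue y xp) = stage y K"
      by (rule adm_dom_eventually_zero) (simp add: y_def)
    moreover have "y \<in> T" using K by (simp add: y_def)
    moreover obtain a b where "a < b" "stage y K = {a..b}" using stage_nontrivial by blast
    ultimately show "\<exists>y. y \<in> {xm. \<exists>a b. a < b \<and> adm_dom f0 f1 (glue xm xp) = {a..b}} \<and> y \<in> T"
      by blast
  qed
  then show "Sigma2_half_top closure_of {xm. \<exists>a b. a < b \<and> adm_dom f0 f1 (glue xm xp) = {a..b}}
      = topspace Sigma2_half_top"
    by (auto simp: Sigma2_half_top_def intro: closure_of_subset_topspace)
qed

theorem uncountable_pasts_with_nontrivial_adm_dom:
  "\<not> countable {xm. \<exists>a b. a < b \<and> adm_dom f0 f1 (glue xm xp) = {a..b}}"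
proof
  assume "countable {xm. \<exists>a b. a < b \<and> adm_dom f0 f1 (glue xm xp) = {a..b}}"
  moreover have "{xm. {1/4..3/4} \<subseteq> adm_dom f0 f1 (glue xm xp)}
      \<subseteq> {xm. \<exists>a b. a < b \<and> adm_dom f0 f1 (glue xm xp) = {a..b}}"
  proof
    fix xm assume "xm \<in> {xm. {1/4..3/4::real} \<subseteq> adm_dom f0 f1 (glue xm xp)}"
    moreover obtain a b where "a \<le> b" "adm_dom f0 f1 (glue xm xp) = {a..b}"
      using adm_dom_interval by blast
    ultimately show "xm \<in> {xm. \<exists>a b. a < b \<and> adm_dom f0 f1 (glue xm xp) = {a..b}}"
      by auto
  qed
  ultimately have "countable {xm. {1/4..3/4::real} \<subseteq> adm_dom f0 f1 (glue xm xp)}"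
    by (rule countable_subset[rotated])
  then show False using uncountable_pasts_with_interval_in_adm_dom[of "1/4" "3/4" xp] by simp
qed

end

section \<open>One-point domains are residual\<close>

locale lipschitz_step_skew_maps = step_skew_maps +
  fixes beta gamma :: real
  assumes beta_ge_1: "1 \<le> beta" and gamma_nonneg: "0 \<le> gamma" and gamma_less_1: "gamma < 1"
    and lipschitz0: "\<And>x y. x \<in> {0..1} \<Longrightarrow> y \<in> {0..1} \<Longrightarrow> \<bar>f0 x - f0 y\<bar> \<le> beta * \<bar>x - y\<bar>"
    and lipschitz1: "\<And>x y. x \<in> {0..1} \<Longrightarrow> y \<in> {0..1} \<Longrightarrow> \<bar>f1 x - f1 y\<bar> \<le> gamma * \<bar>x - y\<bar>"
begin

lemma fsel_lipschitz:
  assumes "x \<in> {0..1}" "y \<in> {0..1}"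
  shows "\<bar>fsel f0 f1 b x - fsel f0 f1 b y\<bar> \<le> beta * \<bar>x - y\<bar>"
proof (cases b)
  case True
  have "\<bar>f1 x - f1 y\<bar> \<le> gamma * \<bar>x - y\<bar>" by (rule lipschitz1[OF assms])
  also have "\<dots> \<le> beta * \<bar>x - y\<bar>" using gamma_less_1 beta_ge_1 by (intro mult_right_mono) auto
  finally show ?thesis using True by (simp add: fsel_def)
qed (use lipschitz0[OF assms] in \<open>simp add: fsel_def\<close>)

lemma compo_lipschitz:
  "x \<in> {0..1} \<Longrightarrow> y \<in> {0..1} \<Longrightarrow>
    \<bar>compo f0 f1 xm m x - compo f0 f1 xm m y\<bar> \<le> beta ^ m * \<bar>x - y\<bar>"
proof (induction m arbitrary: x y)
  case (Suc m)
  have "\<bar>compo f0 f1 xm (Suc m) x - compo f0 f1 xm (Suc m) y\<bar>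
      \<le> beta ^ m * \<bar>fsel f0 f1 (xm m) x - fsel f0 f1 (xm m) y\<bar>"
    using Suc.IH[of "fsel f0 f1 (xm m) x" "fsel f0 f1 (xm m) y"] Suc.prems by (simp add: fsel_in_unit)
  also have "\<dots> \<le> beta ^ m * (beta * \<bar>x - y\<bar>)"
    using fsel_lipschitz[OF Suc.prems] beta_ge_1 by (intro mult_left_mono) auto
  finally show ?case by (simp add: algebra_simps)
qed simp

lemma funpow_f1_lipschitz:
  "x \<in> {0..1} \<Longrightarrow> y \<in> {0..1} \<Longrightarrow> \<bar>(f1 ^^ t) x - (f1 ^^ t) y\<bar> \<le> gamma ^ t * \<bar>x - y\<bar>"
proof (induction t arbitrary: x y)
  case (Suc t)
  have "f1 ^^ t = compo f0 f1 (\<lambda>_. True) t" by (simp add: compo_const fsel_def)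
  then have "(f1 ^^ t) x \<in> {0..1}" "(f1 ^^ t) y \<in> {0..1}"
    using Suc.prems by (auto simp: compo_in_unit)
  then have "\<bar>(f1 ^^ Suc t) x - (f1 ^^ Suc t) y\<bar> \<le> gamma * \<bar>(f1 ^^ t) x - (f1 ^^ t) y\<bar>"
    using lipschitz1 by simp
  also have "\<dots> \<le> gamma * (gamma ^ t * \<bar>x - y\<bar>)"
    using Suc gamma_nonneg by (intro mult_left_mono) auto
  finally show ?case by (simp add: algebra_simps)
qed simp

lemma stage_diameter_after_run_of_ones:
  assumes ones: "\<And>j. M \<le> j \<Longrightarrow> j < M + t \<Longrightarrow> xm j" and xy: "x \<in> {0..1}" "y \<in> {0..1}"
  shows "\<bar>compo f0 f1 xm (M + t) x - compo f0 f1 xm (M + t) y\<bar> \<le> beta ^ M * gamma ^ t"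
proof -
  have "compo f0 f1 (\<lambda>i. xm (M + i)) t = f1 ^^ t"
    by (subst compo_cong[where ym="\<lambda>_. True"]) (auto simp: ones compo_const fsel_def)
  then have eq: "compo f0 f1 xm (M + t) = compo f0 f1 xm M \<circ> f1 ^^ t"
    by (simp add: compo_add)
  have f1t: "(f1 ^^ t) x \<in> {0..1}" "(f1 ^^ t) y \<in> {0..1}"
    using xy compo_in_unit[of _ "\<lambda>_. True" t] by (auto simp: compo_const fsel_def)
  have bpos: "0 < beta ^ M" using beta_ge_1 by simp
  have "\<bar>compo f0 f1 xm (M + t) x - compo f0 f1 xm (M + t) y\<bar>
      \<le> beta ^ M * \<bar>(f1 ^^ t) x - (f1 ^^ t) y\<bar>"
    unfolding eq using compo_lipschitz[OF f1t] by simp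
  also have "\<dots> \<le> beta ^ M * (gamma ^ t * \<bar>x - y\<bar>)"
    using funpow_f1_lipschitz[OF xy] bpos by (intro mult_left_mono) auto
  also have "\<dots> \<le> beta ^ M * gamma ^ t"
    using xy bpos gamma_nonneg by (intro mult_left_mono) (auto intro: mult_left_le)
  finally show ?thesis .
qed

definition fine_set :: "nat \<Rightarrow> (int \<Rightarrow> bool) set" where
  "fine_set n = {xi. \<exists>m. \<forall>x\<in>{0..1}. \<forall>y\<in>{0..1}.
      \<bar>compo f0 f1 (negpart xi) m x - compo f0 f1 (negpart xi) m y\<bar> < 1 / Suc n}"

lemma openin_fine_set: "openin Sigma2_top (fine_set n)"
proof -
  interpret D: Metric_space UNIV dSigma by (rule Metric_space_dSigma)
  show ?thesis unfolding Sigma2_top_def D.openin_mtopology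
  proof (intro conjI allI impI)
    fix xi assume "xi \<in> fine_set n"
    then obtain m where m: "\<forall>x\<in>{0..1}. \<forall>y\<in>{0..1}.
      \<bar>compo f0 f1 (negpart xi) m x - compo f0 f1 (negpart xi) m y\<bar> < 1 / Suc n"
      unfolding fine_set_def by blast
    have "eta \<in> fine_set n" if "dSigma xi eta < (1/2) ^ m" for eta
    proof -
      have "compo f0 f1 (negpart eta) m = compo f0 f1 (negpart xi) m"
        by (rule compo_cong) (use dSigma_less_imp_eq[OF that] in \<open>auto simp: negpart_def\<close>)
      then show ?thesis unfolding fine_set_def using m by (intro CollectI exI[of _ m]) simp
    qed
    then show "\<exists>r>0. D.mball xi r \<subseteq> fine_set n"
      by (intro exI[of _ "(1/2) ^ m"]) auto
  qed simp
qed

lemma dense_fine_set: "Sigma2_top closure_of (fine_set n) = topspace Sigma2_top"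
proof -
  interpret D: Metric_space UNIV dSigma by (rule Metric_space_dSigma)
  have "xi \<in> D.mtopology closure_of (fine_set n)" for xi
    unfolding D.metric_closure_of
  proof (intro CollectI conjI allI impI)
    fix r :: real assume r: "0 < r"
    obtain M where M: "(1/2::real) ^ M < r/2" using real_arch_pow_inv[of "r/2" "1/2"] r by auto
    define eta where "eta i = (if i < - int M then True else xi i)" for i
    have "dSigma xi eta \<le> 2 * (1/2) ^ M" by (rule dSigma_le_if_agree) (auto simp: eta_def)
    then have close: "dSigma xi eta < r" using M by simp
    have bpos: "0 < beta ^ M" using beta_ge_1 by simp
    obtain t where t: "gamma ^ t < 1 / (Suc n * beta ^ M)"
      using real_arch_pow_inv[of "1 / (Suc n * beta ^ M)" gamma] bpos gamma_less_1 by auto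
    have "beta ^ M * gamma ^ t < beta ^ M * (1 / (Suc n * beta ^ M))"
      using t bpos by (intro mult_strict_left_mono) auto
    also have "\<dots> = 1 / Suc n"
    proof -
      have "0 < real (Suc n) * beta ^ M" using bpos by simp
      then show ?thesis using bpos by (simp add: field_simps)
    qed
    finally have "\<bar>compo f0 f1 (negpart eta) (M + t) x - compo f0 f1 (negpart eta) (M + t) y\<bar> < 1 / Suc n"
      if "x \<in> {0..1}" "y \<in> {0..1}" for x y
      using stage_diameter_after_run_of_ones[of M t "negpart eta", OF _ that]
      by (force simp: negpart_def eta_def)
    then have "eta \<in> fine_set n" unfolding fine_set_def by blast
    then show "\<exists>y\<in>fine_set n. y \<in> D.mball xi r" using close by auto
  qed simp
  then show ?thesis unfolding Sigma2_top_def by (auto intro: closure_of_subset_topspace)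
qed

lemma Inter_fine_set_subset: "(\<Inter>n. fine_set n) \<subseteq> {xi. \<exists>p. adm_dom f0 f1 xi = {p}}"
proof
  fix xi assume xi: "xi \<in> (\<Inter>n. fine_set n)"
  obtain p where p: "p \<in> adm_dom f0 f1 xi" using adm_dom_nonempty by blast
  have "q = p" if q: "q \<in> adm_dom f0 f1 xi" for q
  proof (rule ccontr)
    assume "q \<noteq> p"
    then obtain n where n: "inverse (real (Suc n)) < \<bar>q - p\<bar>"
      using reals_Archimedean[of "\<bar>q - p\<bar>"] by auto
    from xi obtain m where m: "\<forall>x\<in>{0..1}. \<forall>y\<in>{0..1}.
      \<bar>compo f0 f1 (negpart xi) m x - compo f0 f1 (negpart xi) m y\<bar> < 1 / Suc n"
      unfolding fine_set_def by blast
    from adm_dom_subset_stage[of xi m] q p obtain x y where "x \<in> {0..1}" "y \<in> {0..1}"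
      "q = compo f0 f1 (negpart xi) m x" "p = compo f0 f1 (negpart xi) m y" by blast
    with m have "\<bar>q - p\<bar> < 1 / Suc n" by auto
    with n show False by (simp add: divide_inverse)
  qed
  with p show "xi \<in> {xi. \<exists>p. adm_dom f0 f1 xi = {p}}" by blast
qed

theorem residual_one_point_adm_dom: "residual_in Sigma2_top {xi. \<exists>p. adm_dom f0 f1 xi = {p}}"
proof -
  interpret D: Metric_space UNIV dSigma by (rule Metric_space_dSigma)
  show ?thesis unfolding residual_in_def
    using openin_fine_set dense_fine_set Inter_fine_set_subset by (auto simp: Sigma2_top_def)
qed

end

lemma above_diagonal_if_only_fixed_points_0_1:
  fixes g :: "real \<Rightarrow> real"
  assumes cont: "continuous_on {0..1} g" and fixed: "{x \<in> {0..1}. g x = x} = {0, 1}"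
    and a: "0 < a" "a < 1" "a \<le> g a" and x: "0 < x" "x < 1"
  shows "x < g x"
proof (rule ccontr)
  assume "\<not> x < g x"
  then have gx: "g x - x \<le> 0" by simp
  have "continuous_on {min x a..max x a} (\<lambda>t. g t - t)"
    using a x by (intro continuous_intros continuous_on_subset[OF cont]) auto
  then obtain t where t: "min x a \<le> t" "t \<le> max x a" "g t - t = 0"
    using IVT'[of "\<lambda>t. g t - t" x 0 a] IVT2'[of "\<lambda>t. g t - t" x 0 a] gx a
    by (cases "x \<le> a") (auto simp: min_def max_def)
  then have "t \<in> {x \<in> {0..1}. g x = x}" using a x by auto
  with fixed t a x show False by auto
qed

lemma abs_le_SUP_abs:
  fixes g :: "real \<Rightarrow> real"
  assumes "x \<in> S" "continuous_on S g" "compact S"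
  shows "\<bar>g x\<bar> \<le> (SUP y\<in>S. \<bar>g y\<bar>)"
  using assms
  by (intro cSUP_upper bounded_imp_bdd_above compact_imp_bounded compact_continuous_image
        continuous_intros) auto

lemma lipschitz_if_derivative_bounded:
  fixes f :: "real \<Rightarrow> real"
  assumes "convex S"
    and "\<And>x. x \<in> S \<Longrightarrow> (f has_real_derivative f' x) (at x within S)"
    and "\<And>x. x \<in> S \<Longrightarrow> \<bar>f' x\<bar> \<le> B" and "x \<in> S" "y \<in> S"
  shows "\<bar>f x - f y\<bar> \<le> B * \<bar>x - y\<bar>"
  using field_differentiable_bound[where S=S and B=B and f=f and f'=f' and x=x and y=y] assms by simp

theorem proposition3p16:
  fixes f0 f1 f0' f1' :: "real \<Rightarrow> real"
    and beta lam alpha gamma' gamma alphabar a0 b0 a1 b1 :: real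
    and N :: nat
  assumes
    \<comment> \<open>f0, f1 are C^1 injective self-maps of [0,1]\<close>
    f0_maps: "f0 ` {0..1} \<subseteq> {0..1}" and f0_inj: "inj_on f0 {0..1}"
    and f0_der: "\<And>x. x \<in> {0..1} \<Longrightarrow> (f0 has_real_derivative f0' x) (at x within {0..1})"
    and f0'_cont: "continuous_on {0..1} f0'"
    and f1_maps: "f1 ` {0..1} \<subseteq> {0..1}" and f1_inj: "inj_on f1 {0..1}"
    and f1_der: "\<And>x. x \<in> {0..1} \<Longrightarrow> (f1 has_real_derivative f1' x) (at x within {0..1})"
    and f1'_cont: "continuous_on {0..1} f1'"
    \<comment> \<open>(F0.i)\<close>
    and f0_incr: "mono_on {0..1} f0"
    and f0_fix: "{x \<in> {0..1}. f0 x = x} = {0, 1}"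
    and beta_def: "f0' 0 = beta" "beta > 1"
    and lambda_def: "f0' 1 = lam" "0 < lam" "lam < 1"
    and f0'_bounds: "\<And>x. x \<in> {0..1} \<Longrightarrow> lam \<le> f0' x \<and> f0' x \<le> beta"
    \<comment> \<open>(F0.ii)\<close>
    and I0: "0 < a0" "a0 \<le> b0" "b0 < 1" "b0 = f0 a0"
    and I1: "a1 \<le> b1" "b1 = f0 a1"
    and alpha_gt: "alpha > 1" and N: "N \<ge> 1"
    and f0N_img: "(f0 ^^ N) ` {a0..b0} = {a1..b1}"
    and f0N_der: "\<And>x. x \<in> {a0..b0} \<Longrightarrow>
        \<exists>D. ((f0 ^^ N) has_real_derivative D) (at x within {0..1}) \<and> lam * D > alpha"
    and f0_exp: "\<And>x. x \<in> {0..b0} \<Longrightarrow> f0' x > 1"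
    and f0_contr: "\<And>x. x \<in> {a1..1} \<Longrightarrow> f0' x < 1"
    \<comment> \<open>(F1.i)\<close>
    and f1_decr: "antimono_on {0..1} f1"
    and gamma_lo: "gamma' = (INF x\<in>{0..1}. \<bar>f1' x\<bar>)"
    and gamma_hi: "gamma = (SUP x\<in>{0..1}. \<bar>f1' x\<bar>)" "gamma' \<le> gamma" "gamma < 1"
    \<comment> \<open>(F1.ii)\<close>
    and alphabar_def: "alphabar > 1 / alpha"
      "\<And>x. x \<in> {f1 (f1 a1)..a1} \<Longrightarrow> \<bar>f1' x\<bar> \<ge> alphabar"
    \<comment> \<open>(F01)\<close>
    and F01: "f1 1 = 0" "f1 ` {a1..1} \<subseteq> {0..<a0}"
      "{0..<(the_inv_into {0..1} f0 ^^ 2) b0} \<subseteq> f1 ` {0..1}"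
  shows
    "residual_in Sigma2_top {xi. \<exists>p. adm_dom f0 f1 xi = {p}}
     \<and> (\<forall>xp :: nat \<Rightarrow> bool.
          \<not> countable {xm. \<exists>a b. a < b \<and> adm_dom f0 f1 (glue xm xp) = {a..b}}
          \<and> dense_in Sigma2_half_top {xm. \<exists>a b. a < b \<and> adm_dom f0 f1 (glue xm xp) = {a..b}})
     \<and> (\<forall>c d. 0 < c \<and> c \<le> d \<and> d < 1 \<longrightarrow>
          (\<forall>xp :: nat \<Rightarrow> bool. \<not> countable {xm. {c..d} \<subseteq> adm_dom f0 f1 (glue xm xp)}))"
proof -
  have cont0: "continuous_on {0..1} f0" and cont1: "continuous_on {0..1} f1"
    using f0_der f1_der DERIV_continuous continuous_on_eq_continuous_within by blast+
  have f0_0: "f0 0 = 0" and f0_1: "f0 1 = 1" using f0_fix by auto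
  have "x < f0 x" if "0 < x" "x < 1" for x
    using above_diagonal_if_only_fixed_points_0_1[OF cont0 f0_fix _ _ _ that] I0 by simp
  moreover have "\<bar>f0 x - f0 y\<bar> \<le> beta * \<bar>x - y\<bar>" if "x \<in> {0..1}" "y \<in> {0..1}" for x y
    using lipschitz_if_derivative_bounded[OF _ f0_der _ that] f0'_bounds lambda_def by fastforce
  moreover have f1'_le: "\<bar>f1' x\<bar> \<le> gamma" if "x \<in> {0..1}" for x
    unfolding gamma_hi(1) using that f1'_cont by (rule abs_le_SUP_abs) simp
  moreover have "\<bar>f1 x - f1 y\<bar> \<le> gamma * \<bar>x - y\<bar>" if "x \<in> {0..1}" "y \<in> {0..1}" for x y
    using lipschitz_if_derivative_bounded[OF _ f1_der f1'_le that] by simp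
  moreover have "0 \<le> gamma" using f1'_le[of 0] by auto
  ultimately interpret lipschitz_step_skew_maps f0 f1 beta gamma
    using cont0 cont1 f0_maps f1_maps f0_inj f1_inj f0_incr f1_decr f0_0 f0_1 F01(1) beta_def
      gamma_hi by unfold_locales auto
  show ?thesis
    using residual_one_point_adm_dom uncountable_pasts_with_nontrivial_adm_dom
      dense_pasts_with_nontrivial_adm_dom uncountable_pasts_with_interval_in_adm_dom by blast
qed

end
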